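(* If the elements $\{y_q+I_F^3:q\in Q\}$ are linearly independent in $(M+I_F^3)/I_F^3$, then $\pi^{Syz}_2$ is surjective (the PVH Criterion is satisfied in degree 2).
   Context: Let $K$ be an augmented unital $\mathbb{Q}$-algebra generated by a set $X$, $F$ the free unital $\mathbb{Q}$-algebra on $X$, and $I_F$ the kernel of the algebra map $F\to\mathbb{Q}$ sending each $x\in X$ to $1$. Let $\tilde X=\mathbb{Q}\{x-1:x\in X\}$, so $F=T\tilde X=\bigoplus_p\tilde X^p$ and $I_F^p=\bigoplus_{q\ge p}\tilde X^q$. Let $M\subseteq I_F^2$ be a two-sided ideal with $K=F/M$ (all algebras completed with respect to powers of augmentation ideals), generated by $\{y_q:q\in Q\}\subseteq I_F^2$. Let $Y_F=\{Y_q\}$ be symbols in bijection with the $y_q$, $R$ the free two-sided $F$-module on $Y_F$, $\partial_K:R\to F$ the bimodule map $Y_q\mapsto y_q$, $R_2=\mathbb{Q}Y_F$, $R_{\ge 2}=R$, $\pi^1_2:R\to R_2$ the projection onto degree 2 (grading with $Y_q$ in degree 2 and $\tilde X$ in degree 1), and $\partial_A:R_2\to\tilde X^2$ the map $Y_q\mapsto$ degree-2 component of $y_q$. $\pi^{Syz}_2:\ker\partial_K\to\ker\partial_A$ is the map induced by $\pi^1_2$. *)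

theory Defs
  imports Complex_Main
begin

text \<open>Model of the completed free algebra F on a set X (the type 'x).
  A word [x1,...,xp] stands for the monomial (x1-1)...(xp-1) in tilde X^p.
  An element of the completion F = prod_p tilde X^p is a function from words
  to rationals with finite support in each length.\<close>

type_synonym 'x FA = "'x list \<Rightarrow> rat"

definition F_elem :: "'x FA \<Rightarrow> bool" where
  "F_elem f \<longleftrightarrow> (\<forall>n. finite {w. length w = n \<and> f w \<noteq> 0})"

definition F_mul :: "'x FA \<Rightarrow> 'x FA \<Rightarrow> 'x FA" where
  "F_mul f g = (\<lambda>w. \<Sum>i\<le>length w. f (take i w) * g (drop i w))"

definition I_F_pow :: "nat \<Rightarrow> 'x FA set" where
  "I_F_pow p = {f. F_elem f \<and> (\<forall>w. length w < p \<longrightarrow> f w = 0)}"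

text \<open>Finitely supported coefficient families on Q (elements of R_2 = Q Y_F).\<close>
definition fin_supp :: "('q \<Rightarrow> rat) \<Rightarrow> bool" where
  "fin_supp c \<longleftrightarrow> finite {q. c q \<noteq> 0}"

definition lin_comb :: "('q \<Rightarrow> 'x FA) \<Rightarrow> ('q \<Rightarrow> rat) \<Rightarrow> 'x FA" where
  "lin_comb y c = (\<lambda>w. \<Sum>q\<in>{q. c q \<noteq> 0}. c q * y q w)"

text \<open>Linear independence of the family (y_q + I_F^3)_q in F/I_F^3
  (equivalently in the subspace (M + I_F^3)/I_F^3).\<close>
definition lin_indep_mod_I3 :: "('q \<Rightarrow> 'x FA) \<Rightarrow> bool" where
  "lin_indep_mod_I3 y \<longleftrightarrow>
     (\<forall>c. fin_supp c \<longrightarrow> lin_comb y c \<in> I_F_pow 3 \<longrightarrow> (\<forall>q. c q = 0))"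

text \<open>The (completed) free F-bimodule R on symbols Y_q: an element is a
  formal sum of u (x) Y_q (x) v, i.e. a coefficient function on triples
  (u,q,v), with finite support in each degree |u|+|v|+2.\<close>
type_synonym ('x,'q) RM = "'x list \<times> 'q \<times> 'x list \<Rightarrow> rat"

definition R_elem :: "('x,'q) RM \<Rightarrow> bool" where
  "R_elem r \<longleftrightarrow> (\<forall>n. finite {(u,q,v). length u + length v = n \<and> r (u,q,v) \<noteq> 0})"

text \<open>The bimodule map partial_K : R -> F, u Y_q v |-> u y_q v.\<close>
definition dK :: "('q \<Rightarrow> 'x FA) \<Rightarrow> ('x,'q) RM \<Rightarrow> 'x FA" where
  "dK y r = (\<lambda>w. \<Sum>i\<le>length w. \<Sum>j\<le>length w - i.
      \<Sum>q\<in>{q. r (take i w, q, drop (length w - j) w) \<noteq> 0}.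
        r (take i w, q, drop (length w - j) w) * y q (drop i (take (length w - j) w)))"

definition ker_dK :: "('q \<Rightarrow> 'x FA) \<Rightarrow> ('x,'q) RM set" where
  "ker_dK y = {r. R_elem r \<and> dK y r = (\<lambda>_. 0)}"

definition dA :: "('q \<Rightarrow> 'x FA) \<Rightarrow> ('q \<Rightarrow> rat) \<Rightarrow> 'x FA" where
  "dA y c = (\<lambda>w. if length w = 2 then lin_comb y c w else 0)"

definition ker_dA :: "('q \<Rightarrow> 'x FA) \<Rightarrow> ('q \<Rightarrow> rat) set" where
  "ker_dA y = {c. fin_supp c \<and> dA y c = (\<lambda>_. 0)}"

definition pi12 :: "('x,'q) RM \<Rightarrow> ('q \<Rightarrow> rat)" where
  "pi12 r = (\<lambda>q. r ([], q, []))"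

end

theory Submission
  imports Defs
begin

text \<open>A syzygy c of the degree-2 map dA makes the degree-2 part of the combination
  sum c_q y_q vanish; since every y_q lies in I_F^2, the whole combination then lies in I_F^3,
  so linear independence modulo I_F^3 forces c = 0. Hence ker dA is trivial, and its only
  element is the image of the zero syzygy of dK.\<close>

lemma lin_comb_F_elem:
  assumes "\<And>q. F_elem (y q)" and "fin_supp c"
  shows "F_elem (lin_comb y c)"
  unfolding F_elem_def
proof
  fix n
  let ?S = "\<Union>q\<in>{q. c q \<noteq> 0}. {w. length w = n \<and> y q w \<noteq> 0}"
  have "{w. length w = n \<and> lin_comb y c w \<noteq> 0} \<subseteq> ?S"
  proof
    fix w assume "w \<in> {w. length w = n \<and> lin_comb y c w \<noteq> 0}"
    then have "length w = n" "(\<Sum>q\<in>{q. c q \<noteq> 0}. c q * y q w) \<noteq> 0"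
      by (auto simp: lin_comb_def)
    then obtain q where "q \<in> {q. c q \<noteq> 0}" "c q * y q w \<noteq> 0"
      using sum.neutral[of "{q. c q \<noteq> 0}" "\<lambda>q. c q * y q w"] by blast
    with \<open>length w = n\<close> show "w \<in> ?S" by auto
  qed
  moreover have "finite ?S"
    using assms unfolding fin_supp_def F_elem_def by auto
  ultimately show "finite {w. length w = n \<and> lin_comb y c w \<noteq> 0}"
    by (rule finite_subset)
qed

lemma lin_comb_eq_0_if_all_eq_0:
  assumes "\<And>q. y q w = 0"
  shows "lin_comb y c w = 0"
  using assms by (simp add: lin_comb_def)

lemma lin_comb_in_I_F_pow_3_if_in_ker_dA:
  fixes y :: "'q \<Rightarrow> 'x FA"
  assumes "\<And>q. y q \<in> I_F_pow 2" and "c \<in> ker_dA y"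
  shows "lin_comb y c \<in> I_F_pow 3"
  unfolding I_F_pow_def
proof (intro CollectI conjI allI impI)
  have "\<And>q. F_elem (y q)" using assms(1) by (auto simp: I_F_pow_def)
  moreover have "fin_supp c" using assms(2) by (simp add: ker_dA_def)
  ultimately show "F_elem (lin_comb y c)" by (rule lin_comb_F_elem)
next
  fix w :: "'x list" assume "length w < 3"
  then consider "length w = 2" | "length w < 2" by linarith
  then show "lin_comb y c w = 0"
  proof cases
    case 1
    from assms(2) have "dA y c w = 0" by (simp add: ker_dA_def)
    with 1 show ?thesis by (simp add: dA_def)
  next
    case 2
    with assms(1) show ?thesis
      by (intro lin_comb_eq_0_if_all_eq_0) (auto simp: I_F_pow_def)
  qed
qed

lemma ker_dA_trivial:
  assumes "\<And>q. y q \<in> I_F_pow 2" and "lin_indep_mod_I3 y"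
  shows "ker_dA y \<subseteq> {\<lambda>_. 0}"
proof
  fix c assume c: "c \<in> ker_dA y"
  then have "lin_comb y c \<in> I_F_pow 3"
    using assms(1) by (rule lin_comb_in_I_F_pow_3_if_in_ker_dA[rotated])
  with c assms(2) have "\<forall>q. c q = 0"
    by (auto simp: lin_indep_mod_I3_def ker_dA_def)
  then show "c \<in> {\<lambda>_. 0}" by auto
qed

lemma zero_in_ker_dK:
  fixes y :: "'q \<Rightarrow> 'x FA"
  shows "(\<lambda>_. 0) \<in> ker_dK y"
proof -
  have empty: "{(u :: 'x list, q :: 'q, v :: 'x list). False} = {}" by auto
  show ?thesis unfolding ker_dK_def R_elem_def dK_def by (simp add: empty)
qed

lemma pi12_zero: "pi12 (\<lambda>_. 0) = (\<lambda>_. 0)"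
  by (simp add: pi12_def)

theorem proposition3p5:
  fixes y :: "'q \<Rightarrow> 'x list \<Rightarrow> rat"
  assumes "\<And>q. y q \<in> I_F_pow 2"
    and "lin_indep_mod_I3 y"
  shows "ker_dA y \<subseteq> pi12 ` ker_dK y"
proof -
  have "ker_dA y \<subseteq> {\<lambda>_. 0}" using assms by (rule ker_dA_trivial)
  also have "\<dots> \<subseteq> pi12 ` ker_dK y"
    using imageI[OF zero_in_ker_dK, of pi12 y] by (simp add: pi12_zero)
  finally show ?thesis .
qed

end
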